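(* For all integers $0\le k\le n$, $A_{k,n}(q)=\sum_{i=0}^{n}\binom{n}{i}E_{k,n-i}(q)$.
   Context: Place $1,\dots,n$ clockwise on a circle. Distinct $p_1,\dots,p_m\in\{1,\dots,n\}$ are in clockwise cyclic order if $(p_2-p_1)\bmod n<(p_3-p_1)\bmod n<\dots<(p_m-p_1)\bmod n$ (residues in $\{0,\dots,n-1\}$). A decorated permutation of $[n]$ is a permutation $\pi\in S_n$ together with a coloring of each fixed point as "clockwise" or "counterclockwise". An ordered pair $(i,j)$, $i\ne j$, is aligned if the entries of $(i,\pi(i),\pi(j),j)$ are pairwise distinct except that possibly $i=\pi(i)$ and/or $j=\pi(j)$, the distinct entries in this order are in clockwise cyclic order, $i$ is colored counterclockwise if $\pi(i)=i$, and $j$ is colored clockwise if $\pi(j)=j$. An alignment is an unordered pair $\{i,j\}$ such that $(i,j)$ or $(j,i)$ is aligned; $\mathrm{al}(\pi)$ is the number of alignments. $K(\pi)=\#\{i:\pi(i)>i\}+\#\{\text{fixed points colored counterclockwise}\}$. Define $A_{k,n}(q)=\sum q^{k(n-k)-\mathrm{al}(\pi)}$ over decorated permutations $\pi$ of $[n]$ with $K(\pi)=k$ (by Postnikov's theorem this is the generating function of the cells of the totally nonnegative Grassmannian $Gr^+_{k,n}$ by dimension). An ordinary permutation $\pi\in S_m$ is regarded as the decorated permutation with all fixed points colored counterclockwise; $i$ is a weak excedence of $\pi$ if $\pi(i)\ge i$. For $m\ge0$, $E_{k,m}(q)=\sum q^{k(m-k)-\mathrm{al}(\pi)}$ over $\pi\in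 S_m$ with exactly $k$ weak excedences (an empty sum, hence $0$, if there are none). *)

theory Defs
  imports "HOL-Combinatorics.Permutations" "HOL-Computational_Algebra.Polynomial"
begin

definition cw_order :: "nat \<Rightarrow> nat list \<Rightarrow> bool" where
  "cw_order n ps \<longleftrightarrow> sorted_wrt (<) (map (\<lambda>p. (int p - int (hd ps)) mod int n) ps)"

text \<open>A decorated permutation of [n] is a pair (pi, C) with pi permuting {1..n} and
C the set of fixed points coloured counterclockwise (the others are clockwise).\<close>
definition decorated_perms :: "nat \<Rightarrow> ((nat \<Rightarrow> nat) \<times> nat set) set" where
  "decorated_perms n = {(\<pi>, C). \<pi> permutes {1..n} \<and> C \<subseteq> {i\<in>{1..n}. \<pi> i = i}}"

definition aligned :: "nat \<Rightarrow> (nat \<Rightarrow> nat) \<Rightarrow> nat set \<Rightarrow> nat \<Rightarrow> nat \<Rightarrow> bool" where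
  "aligned n \<pi> C i j \<longleftrightarrow>
     i \<noteq> j \<and> i \<noteq> \<pi> j \<and> \<pi> i \<noteq> j \<and> \<pi> i \<noteq> \<pi> j \<and>
     cw_order n (remdups [i, \<pi> i, \<pi> j, j]) \<and>
     (\<pi> i = i \<longrightarrow> i \<in> C) \<and> (\<pi> j = j \<longrightarrow> j \<notin> C)"

definition al :: "nat \<Rightarrow> (nat \<Rightarrow> nat) \<Rightarrow> nat set \<Rightarrow> nat" where
  "al n \<pi> C = card {{i, j} | i j. i \<in> {1..n} \<and> j \<in> {1..n} \<and> aligned n \<pi> C i j}"

definition Kstat :: "nat \<Rightarrow> (nat \<Rightarrow> nat) \<Rightarrow> nat set \<Rightarrow> nat" where
  "Kstat n \<pi> C = card {i\<in>{1..n}. \<pi> i > i} + card C"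

definition A_poly :: "nat \<Rightarrow> nat \<Rightarrow> int poly" where
  "A_poly k n = (\<Sum>(\<pi>, C) \<in> {(\<pi>, C) \<in> decorated_perms n. Kstat n \<pi> C = k}.
                   monom 1 (k * (n - k) - al n \<pi> C))"

text \<open>Ordinary permutation: all fixed points coloured counterclockwise.\<close>
definition weak_exc :: "nat \<Rightarrow> (nat \<Rightarrow> nat) \<Rightarrow> nat" where
  "weak_exc m \<pi> = card {i\<in>{1..m}. \<pi> i \<ge> i}"

definition E_poly :: "nat \<Rightarrow> nat \<Rightarrow> int poly" where
  "E_poly k m = (\<Sum>\<pi> \<in> {\<pi>. \<pi> permutes {1..m} \<and> weak_exc m \<pi> = k}.
                   monom 1 (k * (m - k) - al m \<pi> {i\<in>{1..m}. \<pi> i = i}))"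

end

(* Let W be the set of clockwise fixed points of a decorated permutation pi of [n], and let
   g be the increasing bijection from [m], m = n - |W|, onto [n] - W.  Deleting W and
   standardising by g turns pi into an ordinary permutation sigma of [m]; for fixed W this is
   a bijection under which K(pi) becomes the number k of weak excedances of sigma.  Since g
   preserves cyclic order, the alignments of pi avoiding W are the images of those of sigma.
   A clockwise fixed point w is never the first entry of an aligned pair, and (x, w) is aligned
   iff x is a counterclockwise fixed point, an excedance whose arc does not pass over w, or an
   anti-excedance whose arc does; as many arcs pass over w upwards as downwards, so w lies in
   exactly k alignments.  Hence al(pi) = al(sigma) + |W| k, the exponents k(n-k) - al(pi) and
   k(m-k) - al(sigma) agree, and grouping by W, with binom(n,i) choices of size i, gives the
   formula. *)

theory Submission
  imports Defs "HOL-Library.Infinite_Set"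
begin

section \<open>Cyclic order on 1..N\<close>

(* Walking clockwise from p through 1..N, one meets a strictly before b. *)
definition cw_before :: "nat \<Rightarrow> nat \<Rightarrow> nat \<Rightarrow> bool" where
  "cw_before p a b \<longleftrightarrow> (if p \<le> a then (p \<le> b \<and> a < b) \<or> b < p else b < p \<and> a < b)"

lemma mod_diff_less_mod_diff_iff_cw_before:
  assumes "a \<in> {1..N}" "b \<in> {1..N}" "p \<in> {1..N}"
  shows "(int a - int p) mod int N < (int b - int p) mod int N \<longleftrightarrow> cw_before p a b"
proof -
  have "(int x - int p) mod int N = (if p \<le> x then int x - int p else int x - int p + int N)"
    if "x \<in> {1..N}" for x
    using that assms(3) mod_pos_pos_trivial[of "int x - int p + int N" "int N"]
    by auto
  then show ?thesis
    using assms unfolding cw_before_def by auto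
qed

lemma sorted_wrt_cong:
  "(\<And>a b. a \<in> set xs \<Longrightarrow> b \<in> set xs \<Longrightarrow> P a b = Q a b) \<Longrightarrow>
    sorted_wrt P xs = sorted_wrt Q xs"
  by (induction xs) auto

lemma cw_order_iff_sorted_wrt_cw_before:
  assumes "set ps \<subseteq> {1..N}"
  shows "cw_order N ps \<longleftrightarrow> sorted_wrt (cw_before (hd ps)) ps"
proof (cases ps)
  case Nil
  then show ?thesis by (simp add: cw_order_def)
next
  case (Cons p qs)
  have "cw_order N ps \<longleftrightarrow>
      sorted_wrt (\<lambda>a b. (int a - int p) mod int N < (int b - int p) mod int N) ps"
    unfolding cw_order_def Cons by (simp add: sorted_wrt_map)
  also have "\<dots> \<longleftrightarrow> sorted_wrt (cw_before p) ps"
    using assms Cons by (intro sorted_wrt_cong mod_diff_less_mod_diff_iff_cw_before) auto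
  finally show ?thesis using Cons by simp
qed

lemma cw_order_map_strict_mono:
  assumes "set ps \<subseteq> S" "S \<subseteq> {1..N}" "f ` S \<subseteq> {1..M}" "strict_mono_on S f"
  shows "cw_order M (map f ps) \<longleftrightarrow> cw_order N ps"
proof (cases ps)
  case Nil
  then show ?thesis by (simp add: cw_order_def)
next
  case (Cons p qs)
  have "cw_order M (map f ps) \<longleftrightarrow> sorted_wrt (\<lambda>a b. cw_before (f p) (f a) (f b)) ps"
    using assms Cons by (subst cw_order_iff_sorted_wrt_cw_before) (auto simp: sorted_wrt_map)
  also have "\<dots> \<longleftrightarrow> sorted_wrt (cw_before p) ps"
  proof (rule sorted_wrt_cong)
    fix a b assume "a \<in> set ps" "b \<in> set ps"
    then have "a \<in> S" "b \<in> S" "p \<in> S" using assms(1) Cons by auto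
    then show "cw_before (f p) (f a) (f b) = cw_before p a b"
      unfolding cw_before_def
      using strict_mono_on_less[OF assms(4)] strict_mono_on_less_eq[OF assms(4)] by metis
  qed
  also have "\<dots> \<longleftrightarrow> cw_order N ps"
    using assms Cons by (subst cw_order_iff_sorted_wrt_cw_before) auto
  finally show ?thesis .
qed

lemma cw_order_pair:
  assumes "x \<in> {1..n}" "w \<in> {1..n}" "x \<noteq> w"
  shows "cw_order n [x, w]"
  using assms by (auto simp: cw_order_iff_sorted_wrt_cw_before cw_before_def)

lemma cw_order_triple_iff:
  assumes "x \<in> {1..n}" "a \<in> {1..n}" "w \<in> {1..n}" "x \<noteq> a" "x \<noteq> w" "a \<noteq> w"
  shows "cw_order n [x, a, w] \<longleftrightarrow>
    (x < a \<and> \<not> (x < w \<and> w < a)) \<or> (a < x \<and> a < w \<and> w < x)"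
proof -
  have "cw_order n [x, a, w] \<longleftrightarrow> cw_before x x a \<and> cw_before x x w \<and> cw_before x a w"
    using assms by (simp add: cw_order_iff_sorted_wrt_cw_before)
  also have "\<dots> \<longleftrightarrow> (x < a \<and> \<not> (x < w \<and> w < a)) \<or> (a < x \<and> a < w \<and> w < x)"
    using assms(4-6) unfolding cw_before_def by (cases "x < a"; cases "x < w"; cases "a < w") auto
  finally show ?thesis .
qed

section \<open>Alignments with a clockwise fixed point\<close>

lemma card_Collect_split: "finite A \<Longrightarrow> card A = card {x\<in>A. P x} + card {x\<in>A. \<not> P x}"
  using card_Int_Diff[of A "Collect P"] by (simp add: Int_def set_diff_eq)

lemma permutes_card_leaving_eq_card_entering:
  assumes "\<pi> permutes S" "finite S"
  shows "card {x\<in>S. P x \<and> \<not> P (\<pi> x)} = card {x\<in>S. \<not> P x \<and> P (\<pi> x)}"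
proof -
  have "\<pi> -` {x\<in>S. P x} = {x\<in>S. P (\<pi> x)}"
    using permutes_in_image[OF assms(1)] by auto
  then have "card {x\<in>S. P (\<pi> x)} = card {x\<in>S. P x}"
    using card_vimage_inj[OF permutes_inj[OF assms(1)], of "{x\<in>S. P x}"] permutes_surj[OF assms(1)]
    by simp
  moreover have
    "card {x\<in>S. P (\<pi> x)} = card {x\<in>S. P x \<and> P (\<pi> x)} + card {x\<in>S. \<not> P x \<and> P (\<pi> x)}"
    "card {x\<in>S. P x} = card {x\<in>S. P x \<and> P (\<pi> x)} + card {x\<in>S. P x \<and> \<not> P (\<pi> x)}"
    using card_Collect_split[of "{x\<in>S. P (\<pi> x)}" P]
      card_Collect_split[of "{x\<in>S. P x}" "\<lambda>x. P (\<pi> x)"] assms(2)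
    by (simp_all add: conj_commute conj_left_commute)
  ultimately show ?thesis by simp
qed

lemma card_jumps_up_eq_card_jumps_down:
  fixes \<pi> :: "nat \<Rightarrow> nat"
  assumes "\<pi> permutes {1..n}" "\<pi> w = w"
  shows "card {x\<in>{1..n}. x < w \<and> w < \<pi> x} = card {x\<in>{1..n}. \<pi> x < w \<and> w < x}"
proof -
  have fixed_iff: "\<pi> x = w \<longleftrightarrow> x = w" for x
    using assms(2) permutes_inj[OF assms(1)] by (metis injD)
  have "x < w \<and> \<not> \<pi> x < w \<longleftrightarrow> x < w \<and> w < \<pi> x" for x
    using fixed_iff[of x] by (cases "\<pi> x" w rule: linorder_cases) auto
  moreover have "\<not> x < w \<and> \<pi> x < w \<longleftrightarrow> \<pi> x < w \<and> w < x" for x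
    using fixed_iff[of x] by (cases x w rule: linorder_cases) auto
  ultimately show ?thesis
    using permutes_card_leaving_eq_card_entering[OF assms(1), of "\<lambda>x. x < w"] by simp
qed

lemma aligned_cw_fixed_point_iff:
  assumes "(\<pi>, C) \<in> decorated_perms n" "w \<in> {1..n}" "\<pi> w = w" "w \<notin> C" "x \<in> {1..n}"
  shows "aligned n \<pi> C x w \<longleftrightarrow>
    x \<in> C \<or> (x < \<pi> x \<and> \<not> (x < w \<and> w < \<pi> x)) \<or> (\<pi> x < x \<and> \<pi> x < w \<and> w < x)"
proof (cases "x = w")
  case True
  then show ?thesis using assms(3,4) unfolding aligned_def by auto
next
  case False
  have perm: "\<pi> permutes {1..n}" and C: "C \<subseteq> {i\<in>{1..n}. \<pi> i = i}"
    using assms(1) unfolding decorated_perms_def by auto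
  have \<pi>x: "\<pi> x \<in> {1..n}"
    using permutes_in_image[OF perm] assms(5) by blast
  have "\<pi> x \<noteq> w"
    using False assms(3) perm by (metis permutes_inj injD)
  show ?thesis
  proof (cases "\<pi> x = x")
    case True
    then show ?thesis
      using False assms cw_order_pair[of x n w] unfolding aligned_def by auto
  next
    case fixed: False
    then have "x \<notin> C"
      using C by auto
    then show ?thesis
      using False fixed assms(2-5) \<open>\<pi> x \<noteq> w\<close> \<pi>x cw_order_triple_iff[of x n "\<pi> x" w]
      unfolding aligned_def by auto
  qed
qed

lemma card_aligned_with_cw_fixed_point:
  assumes "(\<pi>, C) \<in> decorated_perms n" "w \<in> {1..n}" "\<pi> w = w" "w \<notin> C"
  shows "card {x\<in>{1..n}. aligned n \<pi> C x w} = Kstat n \<pi> C"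
proof -
  have perm: "\<pi> permutes {1..n}" and C: "C \<subseteq> {i\<in>{1..n}. \<pi> i = i}"
    using assms(1) unfolding decorated_perms_def by auto
  define E where "E = {x\<in>{1..n}. x < \<pi> x}"
  define U where "U = {x\<in>{1..n}. x < w \<and> w < \<pi> x}"
  define D where "D = {x\<in>{1..n}. \<pi> x < w \<and> w < x}"
  have "{x\<in>{1..n}. aligned n \<pi> C x w} = C \<union> (E - U) \<union> D"
  proof (rule set_eqI)
    fix x
    show "x \<in> {x\<in>{1..n}. aligned n \<pi> C x w} \<longleftrightarrow> x \<in> C \<union> (E - U) \<union> D"
    proof (cases "x \<in> {1..n}")
      case True
      then show ?thesis
        using aligned_cw_fixed_point_iff[OF assms True] unfolding E_def U_def D_def by auto
    qed (use C in \<open>auto simp: E_def D_def\<close>)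
  qed
  moreover have "finite C"
    using C by (rule finite_subset) simp
  moreover have "finite E" "finite D" "U \<subseteq> E"
    unfolding E_def U_def D_def by auto
  moreover have "C \<inter> (E - U) = {}" "(C \<union> (E - U)) \<inter> D = {}"
    using C unfolding E_def D_def by auto
  ultimately have "card {x\<in>{1..n}. aligned n \<pi> C x w} = card C + (card E - card U) + card D"
    by (simp add: card_Un_disjoint card_Diff_subset finite_subset)
  moreover have "card U \<le> card E"
    using \<open>finite E\<close> \<open>U \<subseteq> E\<close> by (rule card_mono)
  moreover have "card D = card U"
    using card_jumps_up_eq_card_jumps_down[OF perm assms(3)] unfolding U_def D_def by simp
  ultimately show ?thesis
    unfolding Kstat_def E_def by simp
qed

definition alignments :: "nat \<Rightarrow> (nat \<Rightarrow> nat) \<Rightarrow> nat set \<Rightarrow> nat set set" where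
  "alignments n \<pi> C = {{i, j} | i j. i \<in> {1..n} \<and> j \<in> {1..n} \<and> aligned n \<pi> C i j}"

lemma al_eq_card_alignments: "al n \<pi> C = card (alignments n \<pi> C)"
  unfolding al_def alignments_def ..

lemma finite_alignments: "finite (alignments n \<pi> C)"
  by (rule finite_subset[of _ "Pow {1..n}"]) (auto simp: alignments_def)

definition cw_fixed_points :: "nat \<Rightarrow> (nat \<Rightarrow> nat) \<Rightarrow> nat set \<Rightarrow> nat set" where
  "cw_fixed_points n \<pi> C = {i\<in>{1..n}. \<pi> i = i} - C"

lemma aligned_imp_not_cw_fixed_point:
  "aligned n \<pi> C x y \<Longrightarrow> x \<notin> cw_fixed_points n \<pi> C"
  unfolding aligned_def cw_fixed_points_def by auto

lemma al_split_cw_fixed_points: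
  assumes "(\<pi>, C) \<in> decorated_perms n"
  defines "W \<equiv> cw_fixed_points n \<pi> C"
  shows "al n \<pi> C = card {e \<in> alignments n \<pi> C. e \<inter> W = {}} + card W * Kstat n \<pi> C"
proof -
  define partner where "partner w = {x\<in>{1..n}. aligned n \<pi> C x w}" for w
  define edge where "edge = (\<lambda>(w, x). {x, w :: nat})"
  have W: "W \<subseteq> {1..n}" "finite W"
    unfolding W_def cw_fixed_points_def by (auto intro: finite_subset)
  have not_W: "x \<notin> W" if "aligned n \<pi> C x y" for x y
    using aligned_imp_not_cw_fixed_point[OF that] unfolding W_def .
  have "{e \<in> alignments n \<pi> C. e \<inter> W \<noteq> {}} = edge ` (SIGMA w:W. partner w)"
    using not_W W(1) unfolding alignments_def partner_def edge_def by fastforce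
  moreover have "inj_on edge (SIGMA w:W. partner w)"
    using not_W unfolding edge_def partner_def by (auto intro!: inj_onI simp: doubleton_eq_iff)
  moreover have "card (partner w) = Kstat n \<pi> C" if "w \<in> W" for w
    using that card_aligned_with_cw_fixed_point[OF assms(1)]
    unfolding partner_def W_def cw_fixed_points_def by auto
  ultimately have "card {e \<in> alignments n \<pi> C. e \<inter> W \<noteq> {}} = card W * Kstat n \<pi> C"
    using W(2) by (simp add: card_image partner_def)
  moreover have "card (alignments n \<pi> C) =
      card {e \<in> alignments n \<pi> C. e \<inter> W = {}} + card {e \<in> alignments n \<pi> C. e \<inter> W \<noteq> {}}"
    using finite_alignments by (rule card_Collect_split)
  ultimately show ?thesis
    by (simp add: al_eq_card_alignments)
qed

section \<open>Deleting the clockwise fixed points\<close>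

lemma weak_exc_le: "weak_exc m \<sigma> \<le> m"
proof -
  have "card {i\<in>{1..m}. \<sigma> i \<ge> i} \<le> card {1..m}"
    by (rule card_mono) auto
  then show ?thesis
    unfolding weak_exc_def by simp
qed

lemma remdups_map_inj_on:
  "inj_on f (set xs) \<Longrightarrow> remdups (map f xs) = map f (remdups xs)"
  by (induction xs) (auto simp: inj_on_def)

(* g is the increasing bijection from 1..m onto the letters outside W; lift re-inserts the
   letters of W as clockwise fixed points, and standardise inverts it. *)
locale standardisation =
  fixes n m :: nat and W :: "nat set" and g :: "nat \<Rightarrow> nat"
  assumes W_subset: "W \<subseteq> {1..n}"
    and g_strict_mono: "strict_mono_on {1..m} g"
    and g_bij: "bij_betw g {1..m} ({1..n} - W)"
begin

definition remaining :: "nat set" where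
  "remaining = {1..n} - W"

definition ginv :: "nat \<Rightarrow> nat" where
  "ginv = the_inv_into {1..m} g"

lemma g_bij_remaining: "bij_betw g {1..m} remaining"
  using g_bij unfolding remaining_def .

lemma g_inj: "inj_on g {1..m}"
  using g_bij by (rule bij_betw_imp_inj_on)

lemma g_image: "g ` {1..m} = remaining"
  using g_bij_remaining by (rule bij_betw_imp_surj_on)

lemma g_in: "y \<in> {1..m} \<Longrightarrow> g y \<in> remaining"
  unfolding g_image[symmetric] by auto

lemma ginv_bij: "bij_betw ginv remaining {1..m}"
  unfolding ginv_def by (rule bij_betw_the_inv_into[OF g_bij_remaining])

lemma ginv_in: "x \<in> remaining \<Longrightarrow> ginv x \<in> {1..m}"
  using ginv_bij by (rule bij_betw_apply)

lemma g_ginv: "x \<in> remaining \<Longrightarrow> g (ginv x) = x"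
  unfolding ginv_def by (rule f_the_inv_into_f_bij_betw[OF g_bij_remaining])

lemma ginv_g: "y \<in> {1..m} \<Longrightarrow> ginv (g y) = y"
  unfolding ginv_def by (rule the_inv_into_f_f[OF g_inj])

lemma g_eq_iff: "y \<in> {1..m} \<Longrightarrow> z \<in> {1..m} \<Longrightarrow> g y = g z \<longleftrightarrow> y = z"
  using g_inj by (rule inj_on_eq_iff)

lemma g_less_iff: "y \<in> {1..m} \<Longrightarrow> z \<in> {1..m} \<Longrightarrow> g y < g z \<longleftrightarrow> y < z"
  using g_strict_mono by (rule strict_mono_on_less)

lemma n_eq: "n = m + card W"
proof -
  have "m = card ({1..n} - W)"
    using bij_betw_same_card[OF g_bij] by simp
  then show ?thesis
    using W_subset card_mono[OF finite_atLeastAtMost W_subset]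
    by (simp add: card_Diff_subset finite_subset)
qed

lemma Collect_image_g: "{x\<in>remaining. P x} = g ` {y\<in>{1..m}. P (g y)}"
  unfolding g_image[symmetric] by auto

lemma g_image_subset: "g ` {1..m} \<subseteq> {1..n}"
  using g_image unfolding remaining_def by blast

lemma card_image_g: "A \<subseteq> {1..m} \<Longrightarrow> card (g ` A) = card A"
  using inj_on_subset[OF g_inj] by (rule card_image)

definition lift :: "(nat \<Rightarrow> nat) \<Rightarrow> nat \<Rightarrow> nat" where
  "lift \<sigma> x = (if x \<in> remaining then g (\<sigma> (ginv x)) else x)"

definition lift_ccw :: "(nat \<Rightarrow> nat) \<Rightarrow> nat set" where
  "lift_ccw \<sigma> = g ` {y\<in>{1..m}. \<sigma> y = y}"

definition standardise :: "(nat \<Rightarrow> nat) \<Rightarrow> nat \<Rightarrow> nat" where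
  "standardise \<pi> y = (if y \<in> {1..m} then ginv (\<pi> (g y)) else y)"

lemma lift_g: "y \<in> {1..m} \<Longrightarrow> lift \<sigma> (g y) = g (\<sigma> y)"
  by (simp add: lift_def g_in ginv_g)

lemma lift_permutes:
  assumes "\<sigma> permutes {1..m}"
  shows "lift \<sigma> permutes {1..n}"
proof -
  have "bij_betw (g \<circ> (\<sigma> \<circ> ginv)) remaining remaining"
    by (rule bij_betw_trans[OF bij_betw_trans[OF ginv_bij permutes_imp_bij[OF assms]] g_bij_remaining])
  then have "bij_betw (lift \<sigma>) remaining remaining"
    by (rule bij_betw_cong[THEN iffD1, rotated]) (simp add: lift_def)
  then have "lift \<sigma> permutes remaining"
    by (rule bij_imp_permutes) (simp add: lift_def)
  then show ?thesis
    by (rule permutes_subset) (auto simp: remaining_def)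
qed

lemma lift_in_decorated_perms:
  "\<sigma> permutes {1..m} \<Longrightarrow> (lift \<sigma>, lift_ccw \<sigma>) \<in> decorated_perms n"
  using lift_permutes g_in unfolding decorated_perms_def lift_ccw_def remaining_def
  by (auto simp: lift_g)

lemma g_mem_lift_ccw_iff: "y \<in> {1..m} \<Longrightarrow> g y \<in> lift_ccw \<sigma> \<longleftrightarrow> \<sigma> y = y"
  using g_inj unfolding lift_ccw_def by (auto dest: inj_onD)

lemma lift_ccw_subset: "lift_ccw \<sigma> \<subseteq> remaining"
  unfolding lift_ccw_def using g_in by auto

lemma cw_fixed_points_lift:
  assumes "\<sigma> permutes {1..m}"
  shows "cw_fixed_points n (lift \<sigma>) (lift_ccw \<sigma>) = W"
proof -
  have "lift \<sigma> x = x \<longleftrightarrow> x \<in> lift_ccw \<sigma>" if x: "x \<in> remaining" for x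
  proof -
    obtain y where y: "x = g y" "y \<in> {1..m}"
      using x unfolding g_image[symmetric] by (rule imageE)
    have "\<sigma> y \<in> {1..m}"
      using y(2) permutes_in_image[OF assms] by blast
    then have "lift \<sigma> x = x \<longleftrightarrow> \<sigma> y = y"
      unfolding y(1) lift_g[OF y(2)] by (rule g_eq_iff[OF _ y(2)])
    then show ?thesis
      unfolding y(1) g_mem_lift_ccw_iff[OF y(2)] .
  qed
  moreover have "lift \<sigma> x = x" "x \<notin> lift_ccw \<sigma>" if "x \<in> W" for x
    using that lift_ccw_subset unfolding lift_def remaining_def by auto
  moreover have "{1..n} = remaining \<union> W"
    using W_subset unfolding remaining_def by blast
  ultimately show ?thesis
    unfolding cw_fixed_points_def remaining_def by blast
qed

lemma standardise_lift:
  assumes "\<sigma> permutes {1..m}"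
  shows "standardise (lift \<sigma>) = \<sigma>"
proof
  fix y
  show "standardise (lift \<sigma>) y = \<sigma> y"
  proof (cases "y \<in> {1..m}")
    case True
    then have "\<sigma> y \<in> {1..m}"
      using permutes_in_image[OF assms] by blast
    then show ?thesis
      using True by (simp add: standardise_def lift_g ginv_g)
  next
    case False
    then show ?thesis
      unfolding standardise_def if_not_P[OF False] using permutes_not_in[OF assms False] by simp
  qed
qed

lemma permutes_remaining:
  assumes "(\<pi>, C) \<in> decorated_perms n" "cw_fixed_points n \<pi> C = W"
  shows "\<pi> permutes remaining"
proof -
  have "\<pi> permutes {1..n}"
    using assms(1) unfolding decorated_perms_def by auto
  then show ?thesis
    unfolding remaining_def
    by (rule permutes_superset) (use assms(2) in \<open>auto simp: cw_fixed_points_def\<close>)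
qed

lemma standardise_permutes:
  assumes "(\<pi>, C) \<in> decorated_perms n" "cw_fixed_points n \<pi> C = W"
  shows "standardise \<pi> permutes {1..m}"
proof -
  have "bij_betw (ginv \<circ> (\<pi> \<circ> g)) {1..m} {1..m}"
    using permutes_imp_bij[OF permutes_remaining[OF assms]]
    by (rule bij_betw_trans[OF bij_betw_trans[OF g_bij_remaining] ginv_bij])
  then have "bij_betw (standardise \<pi>) {1..m} {1..m}"
    by (rule bij_betw_cong[THEN iffD1, rotated]) (simp add: standardise_def)
  then show ?thesis
    by (rule bij_imp_permutes) (simp add: standardise_def del: atLeastAtMost_iff)
qed

lemma lift_standardise:
  assumes "(\<pi>, C) \<in> decorated_perms n" "cw_fixed_points n \<pi> C = W"
  shows "lift (standardise \<pi>) = \<pi>" "lift_ccw (standardise \<pi>) = C"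
proof -
  have perm: "\<pi> permutes remaining"
    by (rule permutes_remaining[OF assms])
  have g_standardise: "g (standardise \<pi> y) = \<pi> (g y)" if "y \<in> {1..m}" for y
    using that g_ginv[OF permutes_in_image[OF perm, THEN iffD2, OF g_in[OF that]]]
    by (simp add: standardise_def)
  show "lift (standardise \<pi>) = \<pi>"
  proof
    fix x
    show "lift (standardise \<pi>) x = \<pi> x"
      using g_standardise[OF ginv_in] g_ginv permutes_not_in[OF perm] by (simp add: lift_def)
  qed
  have "standardise \<pi> y = y \<longleftrightarrow> \<pi> (g y) = g y" if "y \<in> {1..m}" for y
    using g_eq_iff[OF permutes_in_image[OF standardise_permutes[OF assms], THEN iffD2, OF that] that]
      g_standardise[OF that] by simp
  then have "lift_ccw (standardise \<pi>) = {x\<in>remaining. \<pi> x = x}"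
    unfolding lift_ccw_def Collect_image_g by auto
  also have "\<dots> = C"
    using assms unfolding decorated_perms_def cw_fixed_points_def remaining_def by auto
  finally show "lift_ccw (standardise \<pi>) = C" .
qed

lemma Kstat_lift:
  assumes "\<sigma> permutes {1..m}"
  shows "Kstat n (lift \<sigma>) (lift_ccw \<sigma>) = weak_exc m \<sigma>"
proof -
  have \<sigma>_in: "\<sigma> y \<in> {1..m}" if "y \<in> {1..m}" for y
    using permutes_in_image[OF assms] that by blast
  have exc: "g y < lift \<sigma> (g y) \<longleftrightarrow> y < \<sigma> y" if "y \<in> {1..m}" for y
    unfolding lift_g[OF that] using g_less_iff[OF that \<sigma>_in[OF that]] .
  have "lift \<sigma> x = x" if "x \<notin> remaining" for x
    using that unfolding lift_def by simp
  then have "{x\<in>{1..n}. x < lift \<sigma> x} = {x\<in>remaining. x < lift \<sigma> x}"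
    unfolding remaining_def by auto
  also have "\<dots> = g ` {y\<in>{1..m}. g y < lift \<sigma> (g y)}"
    by (rule Collect_image_g)
  also have "\<dots> = g ` {y\<in>{1..m}. y < \<sigma> y}"
    by (rule arg_cong[where f = "image g"]) (use exc in blast)
  finally have "card {x\<in>{1..n}. x < lift \<sigma> x} = card (g ` {y\<in>{1..m}. y < \<sigma> y})"
    by (rule arg_cong)
  also have "\<dots> = card {y\<in>{1..m}. y < \<sigma> y}"
    by (rule card_image_g) auto
  moreover have "card (lift_ccw \<sigma>) = card {y\<in>{1..m}. \<sigma> y = y}"
    unfolding lift_ccw_def by (rule card_image_g) auto
  moreover have "{y\<in>{1..m}. y \<le> \<sigma> y} = {y\<in>{1..m}. y < \<sigma> y} \<union> {y\<in>{1..m}. \<sigma> y = y}"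
    by auto
  then have "weak_exc m \<sigma> = card {y\<in>{1..m}. y < \<sigma> y} + card {y\<in>{1..m}. \<sigma> y = y}"
    unfolding weak_exc_def by (simp add: card_Un_disjoint disjoint_iff)
  ultimately show ?thesis
    unfolding Kstat_def by simp
qed

lemma aligned_lift_iff:
  assumes "\<sigma> permutes {1..m}" "i \<in> {1..m}" "j \<in> {1..m}"
  shows "aligned n (lift \<sigma>) (lift_ccw \<sigma>) (g i) (g j) \<longleftrightarrow>
    aligned m \<sigma> {y\<in>{1..m}. \<sigma> y = y} i j"
proof -
  have \<sigma>_in: "\<sigma> i \<in> {1..m}" "\<sigma> j \<in> {1..m}"
    using permutes_in_image[OF assms(1)] assms(2,3) by blast+
  have set: "set [i, \<sigma> i, \<sigma> j, j] \<subseteq> {1..m}"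
    using assms(2,3) \<sigma>_in by auto
  have "[g i, lift \<sigma> (g i), lift \<sigma> (g j), g j] = map g [i, \<sigma> i, \<sigma> j, j]"
    using assms(2,3) by (simp add: lift_g)
  then have "remdups [g i, lift \<sigma> (g i), lift \<sigma> (g j), g j] = map g (remdups [i, \<sigma> i, \<sigma> j, j])"
    using remdups_map_inj_on[OF inj_on_subset[OF g_inj set]] by (simp only:)
  moreover have "cw_order n (map g (remdups [i, \<sigma> i, \<sigma> j, j])) \<longleftrightarrow>
      cw_order m (remdups [i, \<sigma> i, \<sigma> j, j])"
    using set
    by (intro cw_order_map_strict_mono[OF _ order_refl g_image_subset g_strict_mono])
      (simp only: set_remdups)
  ultimately have cw: "cw_order n (remdups [g i, lift \<sigma> (g i), lift \<sigma> (g j), g j]) \<longleftrightarrow>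
      cw_order m (remdups [i, \<sigma> i, \<sigma> j, j])"
    by simp
  show ?thesis
    unfolding aligned_def cw using assms(2,3) \<sigma>_in
    by (simp add: lift_g g_eq_iff g_mem_lift_ccw_iff)
qed

lemma alignments_lift:
  assumes "\<sigma> permutes {1..m}"
  shows "{e \<in> alignments n (lift \<sigma>) (lift_ccw \<sigma>). e \<inter> W = {}} =
    image g ` alignments m \<sigma> {y\<in>{1..m}. \<sigma> y = y}"
    (is "?lifted = image g ` ?A")
proof
  show "?lifted \<subseteq> image g ` ?A"
  proof
    fix e
    assume "e \<in> ?lifted"
    then obtain x z where e: "e = {x, z}" "x \<in> remaining" "z \<in> remaining"
      and aligned: "aligned n (lift \<sigma>) (lift_ccw \<sigma>) x z"
      unfolding alignments_def remaining_def by blast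
    obtain a b where ab: "x = g a" "a \<in> {1..m}" "z = g b" "b \<in> {1..m}"
      using e(2,3) unfolding g_image[symmetric] by (elim imageE)
    have "{a, b} \<in> ?A"
      using aligned aligned_lift_iff[OF assms ab(2,4)] ab unfolding alignments_def by blast
    moreover have "e = g ` {a, b}"
      using e(1) ab by simp
    ultimately show "e \<in> image g ` ?A"
      by blast
  qed
  show "image g ` ?A \<subseteq> ?lifted"
  proof
    fix e
    assume "e \<in> image g ` ?A"
    then obtain a b where e: "e = {g a, g b}" "a \<in> {1..m}" "b \<in> {1..m}"
      and aligned: "aligned m \<sigma> {y\<in>{1..m}. \<sigma> y = y} a b"
      unfolding alignments_def by auto
    have "g a \<in> remaining" "g b \<in> remaining"
      using e(2,3) by (simp_all add: g_in)
    then show "e \<in> ?lifted"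
      using aligned aligned_lift_iff[OF assms e(2,3)] e(1)
      unfolding alignments_def remaining_def by blast
  qed
qed

lemma al_lift:
  assumes "\<sigma> permutes {1..m}"
  shows "al n (lift \<sigma>) (lift_ccw \<sigma>) =
    al m \<sigma> {y\<in>{1..m}. \<sigma> y = y} + card W * weak_exc m \<sigma>"
proof -
  have "inj_on (image g) (alignments m \<sigma> {y\<in>{1..m}. \<sigma> y = y})"
    by (rule inj_on_subset[OF inj_on_image_Pow[OF g_inj]]) (auto simp: alignments_def)
  then show ?thesis
    using al_split_cw_fixed_points[OF lift_in_decorated_perms[OF assms]]
    by (simp add: cw_fixed_points_lift[OF assms] alignments_lift[OF assms] Kstat_lift[OF assms]
        card_image al_eq_card_alignments)
qed

lemma bij_betw_lift:
  "bij_betw (\<lambda>\<sigma>. (lift \<sigma>, lift_ccw \<sigma>)) {\<sigma>. \<sigma> permutes {1..m} \<and> weak_exc m \<sigma> = k}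
    {(\<pi>, C) \<in> decorated_perms n. Kstat n \<pi> C = k \<and> cw_fixed_points n \<pi> C = W}"
    (is "bij_betw _ ?S ?D")
proof -
  have "\<forall>\<sigma>\<in>?S. standardise (fst (lift \<sigma>, lift_ccw \<sigma>)) = \<sigma>"
    by (simp add: standardise_lift)
  moreover have "\<forall>p\<in>?D. (lift (standardise (fst p)), lift_ccw (standardise (fst p))) = p"
    using lift_standardise by fastforce
  moreover have "(\<lambda>\<sigma>. (lift \<sigma>, lift_ccw \<sigma>)) ` ?S \<subseteq> ?D"
    by (auto simp: lift_in_decorated_perms Kstat_lift cw_fixed_points_lift)
  moreover have "(\<lambda>p. standardise (fst p)) ` ?D \<subseteq> ?S"
    using standardise_permutes Kstat_lift[OF standardise_permutes] lift_standardise by fastforce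
  ultimately show ?thesis
    by (rule bij_betw_byWitness)
qed

lemma sum_fibre_eq_E_poly:
  "(\<Sum>(\<pi>, C) \<in> {(\<pi>, C) \<in> decorated_perms n. Kstat n \<pi> C = k \<and> cw_fixed_points n \<pi> C = W}.
      monom (1::int) (k * (n - k) - al n \<pi> C)) = E_poly k m"
proof -
  have exponent: "k * (n - k) - al n (lift \<sigma>) (lift_ccw \<sigma>) =
      k * (m - k) - al m \<sigma> {y\<in>{1..m}. \<sigma> y = y}"
    if "\<sigma> permutes {1..m}" "weak_exc m \<sigma> = k" for \<sigma>
  proof -
    have "k * (n - k) = k * (m - k) + card W * k"
      using n_eq weak_exc_le[of m \<sigma>] that(2) by (simp add: algebra_simps)
    then show ?thesis
      using al_lift[OF that(1)] that(2) by simp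
  qed
  show ?thesis
    unfolding E_poly_def
    by (subst sum.reindex_bij_betw[OF bij_betw_lift, symmetric]) (simp add: exponent)
qed

end

section \<open>Grouping by the clockwise fixed points\<close>

lemma exists_standardisation:
  assumes "W \<subseteq> {1..n}"
  shows "\<exists>g. standardisation n (n - card W) W g"
proof -
  define T where "T = {1..n} - W"
  have "finite T"
    unfolding T_def by simp
  have card_T: "card T = n - card W"
    unfolding T_def using assms by (simp add: card_Diff_subset finite_subset)
  define g where "g y = enumerate T (y - 1)" for y
  have "strict_mono_on {1..n - card W} g"
    unfolding card_T[symmetric]
    by (rule strict_mono_onI) (auto simp: g_def intro: finite_enumerate_mono[OF _ \<open>finite T\<close>])
  moreover have "bij_betw (\<lambda>y. y - 1) {1..card T} {..<card T}"
    by (rule bij_betw_byWitness[where f' = Suc]) auto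
  then have "bij_betw g {1..n - card W} ({1..n} - W)"
    unfolding g_def card_T[symmetric] T_def[symmetric]
    using bij_betw_trans[OF _ finite_bij_enumerate[OF \<open>finite T\<close>]] by (auto simp: comp_def)
  ultimately show ?thesis
    using assms by (blast intro: standardisation.intro)
qed

lemma sum_Pow_by_card:
  fixes f :: "nat \<Rightarrow> 'a::comm_semiring_1"
  assumes "finite A"
  shows "(\<Sum>B\<in>Pow A. f (card B)) = (\<Sum>i = 0..card A. of_nat (card A choose i) * f i)"
proof -
  have "(\<Sum>B\<in>Pow A. f (card B)) = (\<Sum>i = 0..card A. \<Sum>B\<in>{B\<in>Pow A. card B = i}. f (card B))"
    by (rule sum.group[symmetric]) (use assms in \<open>auto intro: card_mono\<close>)
  also have "\<dots> = (\<Sum>i = 0..card A. of_nat (card A choose i) * f i)"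
  proof (rule sum.cong[OF refl])
    fix i
    have "{B\<in>Pow A. card B = i} = {B. B \<subseteq> A \<and> card B = i}"
      by blast
    then show "(\<Sum>B\<in>{B\<in>Pow A. card B = i}. f (card B)) = of_nat (card A choose i) * f i"
      using n_subsets[OF assms] by simp
  qed
  finally show ?thesis .
qed

lemma A_poly_eq_sum_Pow: "A_poly k n = (\<Sum>W\<in>Pow {1..n}. E_poly k (n - card W))"
proof -
  let ?D = "{(\<pi>, C) \<in> decorated_perms n. Kstat n \<pi> C = k}"
  let ?F = "\<lambda>(\<pi>, C). monom (1::int) (k * (n - k) - al n \<pi> C)"
  have "?D \<subseteq> {\<pi>. \<pi> permutes {1..n}} \<times> Pow {1..n}"
    unfolding decorated_perms_def by auto
  then have fin: "finite ?D"
    by (rule finite_subset) (simp add: finite_permutations)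
  have img: "(\<lambda>(\<pi>, C). cw_fixed_points n \<pi> C) ` ?D \<subseteq> Pow {1..n}"
    unfolding cw_fixed_points_def by auto
  have "A_poly k n =
      (\<Sum>W\<in>Pow {1..n}. \<Sum>p\<in>{p \<in> ?D. (\<lambda>(\<pi>, C). cw_fixed_points n \<pi> C) p = W}. ?F p)"
    unfolding A_poly_def by (rule sum.group[symmetric, OF fin _ img]) simp
  also have "\<dots> = (\<Sum>W\<in>Pow {1..n}. E_poly k (n - card W))"
  proof (rule sum.cong[OF refl])
    fix W
    assume "W \<in> Pow {1..n}"
    then obtain g where "standardisation n (n - card W) W g"
      using exists_standardisation by blast
    moreover have "{p \<in> ?D. (\<lambda>(\<pi>, C). cw_fixed_points n \<pi> C) p = W} =
        {(\<pi>, C) \<in> decorated_perms n. Kstat n \<pi> C = k \<and> cw_fixed_points n \<pi> C = W}"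
      by auto
    ultimately show "(\<Sum>p\<in>{p \<in> ?D. (\<lambda>(\<pi>, C). cw_fixed_points n \<pi> C) p = W}. ?F p) =
        E_poly k (n - card W)"
      using standardisation.sum_fibre_eq_E_poly by simp
  qed
  finally show ?thesis .
qed

theorem mainTheorem8:
  fixes k n :: nat
  assumes "k \<le> n"
  shows "A_poly k n = (\<Sum>i = 0..n. of_nat (n choose i) * E_poly k (n - i))"
  using sum_Pow_by_card[of "{1..n}" "\<lambda>i. E_poly k (n - i)"] by (simp add: A_poly_eq_sum_Pow)

end
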